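(* Let $V_1,V_2$ be complex vector spaces of dimensions $n_1\geq 2$, $n_2\geq 2$, with bases $(e_1,\dots,e_{n_1})$ and $(f_1,\dots,f_{n_2})$, and let $n=\min(n_1,n_2)$. Let $G=\mathrm{GL}(V_1)\times\mathrm{GL}(V_2)$ act naturally on $\overline{X}=\mathbb{P}(V_1)\times\mathbb{P}(V_2)\times\mathbb{P}((V_1\otimes V_2)^* )$ and let $\overline{\mathcal{L}}=\mathcal{O}(1)\boxtimes\mathcal{O}(1)\boxtimes\mathcal{O}(1)$ with its natural $G$-linearisation. Then the set $\overline{X}^{us}(\overline{\mathcal{L}})$ of unstable points is the closure of the $G$-orbit of $\overline{x}=(\mathbb{C}e_1,\mathbb{C}f_2,\mathbb{C}\varphi_n)$, where $\varphi_n=\sum_{i=1}^n e_i^*\otimes f_i^*\in V_1^*\otimes V_2^*\simeq(V_1\otimes V_2)^*$.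
   Context: $(e_i^* )$ and $(f_j^* )$ are the dual bases. $G$ acts on $(V_1\otimes V_2)^*$ by the contragredient of the tensor product action. For a $G$-linearised line bundle $\mathcal{N}$ on a $G$-variety $Y$, the semi-stable set is $Y^{ss}(\mathcal{N})=\{y:\exists k\geq1,\exists\sigma\in\mathrm{H}^0(Y,\mathcal{N}^{\otimes k})^G,\ \sigma(y)\neq0\}$, and the unstable set $Y^{us}(\mathcal{N})$ is its complement. *)

theory Defs
  imports "HOL-Analysis.Analysis"
begin

(* A point of V1 x V2 x (V1 (x) V2)-dual in coordinates:
   v in C^n1, w in C^n2, and the bilinear form phi given by its matrix M,
   phi(v,w) = sum_{i,j} v_i M_ij w_j. *)
type_synonym ('n1,'n2) pt = "(complex^'n1) \<times> (complex^'n2) \<times> (complex^'n2^'n1)"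

inductive poly_fun :: "(('n1::finite,'n2::finite) pt \<Rightarrow> complex) \<Rightarrow> bool" where
  pf_const: "poly_fun (\<lambda>_. c)"
| pf_var1: "poly_fun (\<lambda>(v,w,M). v $ i)"
| pf_var2: "poly_fun (\<lambda>(v,w,M). w $ j)"
| pf_var3: "poly_fun (\<lambda>(v,w,M). M $ i $ j)"
| pf_add: "poly_fun f \<Longrightarrow> poly_fun g \<Longrightarrow> poly_fun (\<lambda>p. f p + g p)"
| pf_mult: "poly_fun f \<Longrightarrow> poly_fun g \<Longrightarrow> poly_fun (\<lambda>p. f p * g p)"

definition multihom :: "(('n1::finite,'n2::finite) pt \<Rightarrow> complex) \<Rightarrow> nat \<Rightarrow> nat \<Rightarrow> nat \<Rightarrow> bool" where
  "multihom f a b c \<longleftrightarrow>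
     (\<forall>s t u v w M. f ((\<chi> i. s * v $ i), (\<chi> j. t * w $ j), (\<chi> i j. u * M $ i $ j))
                     = s ^ a * t ^ b * u ^ c * f (v, w, M))"

(* action of (g,h) in GL(V1) x GL(V2); contragredient action on bilinear forms *)
definition pact :: "complex^'n1^'n1 \<Rightarrow> complex^'n2^'n2 \<Rightarrow> ('n1::finite,'n2::finite) pt \<Rightarrow> ('n1,'n2) pt" where
  "pact g h p = (case p of (v, w, M) \<Rightarrow>
      (g *v v, h *v w, transpose (matrix_inv g) ** M ** matrix_inv h))"

(* nonzero representatives of points of P(V1) x P(V2) x P((V1 (x) V2)-dual) *)
definition valid_pt :: "('n1::finite,'n2::finite) pt \<Rightarrow> bool" where
  "valid_pt p \<longleftrightarrow> (case p of (v, w, M) \<Rightarrow> v \<noteq> 0 \<and> w \<noteq> 0 \<and> M \<noteq> 0)"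

(* G-invariant sections of L^k = O(k) boxtimes O(k) boxtimes O(k) *)
definition invariant_section :: "nat \<Rightarrow> (('n1::finite,'n2::finite) pt \<Rightarrow> complex) \<Rightarrow> bool" where
  "invariant_section k f \<longleftrightarrow> poly_fun f \<and> multihom f k k k \<and>
     (\<forall>g h q. invertible g \<and> invertible h \<longrightarrow> f (pact g h q) = f q)"

definition semistable :: "('n1::finite,'n2::finite) pt \<Rightarrow> bool" where
  "semistable p \<longleftrightarrow> (\<exists>k\<ge>1. \<exists>f. invariant_section k f \<and> f p \<noteq> 0)"

definition unstable_set :: "('n1::finite,'n2::finite) pt set" where
  "unstable_set = {p. valid_pt p \<and> \<not> semistable p}"

definition orbit :: "('n1::finite,'n2::finite) pt \<Rightarrow> ('n1,'n2) pt set" where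
  "orbit x = {pact g h x | g h. invertible g \<and> invertible h}"

(* Zariski closure in P(V1) x P(V2) x P((V1 (x) V2)-dual):
   closed sets are common zero loci of multihomogeneous polynomials *)
definition zariski_closure :: "('n1::finite,'n2::finite) pt set \<Rightarrow> ('n1,'n2) pt set" where
  "zariski_closure S = {p. valid_pt p \<and>
     (\<forall>f a b c. poly_fun f \<and> multihom f a b c \<and> (\<forall>q\<in>S. f q = 0) \<longrightarrow> f p = 0)}"

(* xbar = (C e_1, C f_2, C phi_n), bases indexed from 0 via i1, i2 *)
definition xbar :: "(nat \<Rightarrow> 'n1) \<Rightarrow> (nat \<Rightarrow> 'n2) \<Rightarrow> ('n1::finite,'n2::finite) pt" where
  "xbar i1 i2 = (axis (i1 0) 1, axis (i2 1) 1,
     (\<chi> a b. if \<exists>k < min CARD('n1) CARD('n2). a = i1 k \<and> b = i2 k then 1 else 0))"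

end

theory Submission
  imports Defs "HOL-Computational_Algebra.Polynomial"
begin

text \<open>The form \<phi>(v \<otimes> w) is itself an invariant section of degree 1, so unstable points lie
  on the hypersurface \<phi>(v \<otimes> w) = 0. Conversely, the torus element scaling e_1 by 2 and f_1 by 1/2
  fixes f_2 and \<phi>_n, so it fixes xbar while multiplying an invariant section of degree k by 2^k;
  hence every such section vanishes on the orbit of xbar and on its closure.
  For density of the orbit in the hypersurface, move a point with \<phi>(v \<otimes> w) = 0 to one of the
  form (e_1, f_2, M) with M(e_1, f_2) = 0. For all large |e| the point (e_1, f_2, M + e \<phi>_n)
  lies in the orbit, as the perturbation is then dominated by e \<phi>_n; a polynomial vanishing on this
  line for large |e| vanishes at e = 0.\<close>

lemma matrix_inv_right:
  fixes A :: "'a::field^'n^'n"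
  assumes "invertible A"
  shows "A ** matrix_inv A = mat 1"
  using someI_ex[OF assms[unfolded invertible_def]] by (simp add: matrix_inv_def)

lemma matrix_inv_left:
  fixes A :: "'a::field^'n^'n"
  assumes "invertible A"
  shows "matrix_inv A ** A = mat 1"
  using someI_ex[OF assms[unfolded invertible_def]] by (simp add: matrix_inv_def)

lemma matrix_inv_unique:
  fixes A B :: "'a::field^'n^'n"
  assumes "A ** B = mat 1"
  shows "matrix_inv A = B"
proof -
  have "invertible A" using assms invertible_right_inverse by blast
  then have "matrix_inv A = (matrix_inv A ** A) ** B"
    by (simp add: assms matrix_mul_assoc[symmetric])
  then show ?thesis by (simp add: matrix_inv_left[OF \<open>invertible A\<close>])
qed

lemma invertible_matrix_inv:
  fixes A :: "'a::field^'n^'n"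
  assumes "invertible A"
  shows "invertible (matrix_inv A)" and "matrix_inv (matrix_inv A) = A"
  using matrix_inv_left[OF assms] invertible_right_inverse matrix_inv_unique by blast+

lemma invertible_transpose:
  fixes A :: "'a::field^'n^'n"
  assumes "invertible A"
  shows "invertible (transpose A)" and "matrix_inv (transpose A) = transpose (matrix_inv A)"
proof -
  have "transpose A ** transpose (matrix_inv A) = mat 1"
    by (metis matrix_inv_left[OF assms] matrix_transpose_mul transpose_mat)
  then show "invertible (transpose A)" "matrix_inv (transpose A) = transpose (matrix_inv A)"
    using invertible_right_inverse matrix_inv_unique by blast+
qed

lemma matrix_inv_mult:
  fixes A B :: "'a::field^'n^'n"
  assumes "invertible A" and "invertible B"
  shows "matrix_inv (A ** B) = matrix_inv B ** matrix_inv A"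
proof (rule matrix_inv_unique)
  have "A ** B ** (matrix_inv B ** matrix_inv A) = A ** (B ** matrix_inv B) ** matrix_inv A"
    by (simp add: matrix_mul_assoc)
  then show "A ** B ** (matrix_inv B ** matrix_inv A) = mat 1"
    by (simp add: matrix_inv_right assms)
qed

lemma invertible_if_trivial_kernel:
  fixes A :: "'a::field^'n^'n"
  assumes "\<And>x. A *v x = 0 \<Longrightarrow> x = 0"
  shows "invertible A"
  using assms invertible_left_inverse matrix_left_invertible_ker by blast

lemma matrix_vector_mult_axis: "A *v axis j 1 = column j A"
proof -
  have "(A *v axis j 1)$a = (\<Sum>k\<in>UNIV. if k = j then A$a$j else 0)" for a
    unfolding matrix_vector_mult_def vec_lambda_beta by (intro sum.cong) (auto simp: axis_def)
  then show ?thesis by (simp add: column_def vec_eq_iff)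
qed

definition replace_col :: "'n \<Rightarrow> 'a::semiring_1^'n \<Rightarrow> 'a^'n^'n" where
  "replace_col j c = (\<chi> a b. if b = j then c$a else if a = b then 1 else 0)"

lemma replace_col_mult_vec:
  "(replace_col j c *v x)$a = c$a * x$j + (if a = j then 0 else x$a)"
proof -
  have "(replace_col j c *v x)$a
      = (\<Sum>b\<in>UNIV. (if b = j then c$a * x$j else 0) + (if b = a \<and> a \<noteq> j then x$a else 0))"
    unfolding matrix_vector_mult_def replace_col_def vec_lambda_beta by (intro sum.cong) auto
  then show ?thesis by (simp add: sum.distrib)
qed

lemma replace_col_axis: "replace_col j c *v axis k 1 = (if k = j then c else axis k 1)"
  by (auto simp: vec_eq_iff replace_col_mult_vec axis_def)

lemma invertible_replace_col:
  fixes c :: "'a::field^'n"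
  assumes "c$j \<noteq> 0"
  shows "invertible (replace_col j c)"
proof (rule invertible_if_trivial_kernel)
  fix x assume x: "replace_col j c *v x = 0"
  then have "c$j * x$j = 0" using replace_col_mult_vec[of j c x j] by simp
  then have "x$j = 0" using assms by simp
  have "x$a = 0" for a
    using arg_cong[OF x, of "\<lambda>y. y$a"] \<open>x$j = 0\<close> by (simp add: replace_col_mult_vec split: if_splits)
  then show "x = 0" by (simp add: vec_eq_iff)
qed

lemma exists_invertible_axis_to:
  fixes v :: "'a::field^'n" and i :: 'n
  assumes "v \<noteq> 0"
  shows "\<exists>A. invertible A \<and> A *v axis i 1 = v"
proof (cases "v$i = 0")
  case False
  then show ?thesis using invertible_replace_col replace_col_axis by metis
next
  case True
  obtain j where j: "v$j \<noteq> 0" using assms by (metis vec_eq_iff zero_index)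
  with True have "i \<noteq> j" by auto
  \<comment> \<open>first send e_i to e_i + e_j, then send e_j to v - e_i\<close>
  define A where "A = replace_col j (v - axis i 1) ** replace_col i (axis i 1 + axis j 1)"
  have "invertible A"
    unfolding A_def using \<open>i \<noteq> j\<close> j True
    by (intro invertible_mult invertible_replace_col) (auto simp: axis_def)
  moreover have "A *v axis i 1 = v"
    using \<open>i \<noteq> j\<close> by (simp add: A_def matrix_vector_mul_assoc[symmetric] replace_col_axis
        matrix_vector_right_distrib)
  ultimately show ?thesis by blast
qed

lemma poly_fun_sum:
  assumes "finite S" and "\<And>x. x \<in> S \<Longrightarrow> poly_fun (g x)"
  shows "poly_fun (\<lambda>p. \<Sum>x\<in>S. g x p)"
  using assms
proof (induction S rule: finite_induct)
  case empty
  then show ?case using pf_const[of 0] by simp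
next
  case (insert x F)
  then have "poly_fun (\<lambda>p. g x p + (\<Sum>x\<in>F. g x p))" by (intro pf_add) auto
  then show ?case using insert by simp
qed

lemma poly_fun_on_line:
  assumes "poly_fun f"
  shows "\<exists>P. \<forall>e. f (v, w, \<chi> i j. M$i$j + e * X$i$j) = poly P e"
  using assms
proof (induction f rule: poly_fun.induct)
  case (pf_const c)
  show ?case by (rule exI[of _ "[:c:]"]) simp
next
  case (pf_var1 i)
  show ?case by (rule exI[of _ "[:v$i:]"]) simp
next
  case (pf_var2 j)
  show ?case by (rule exI[of _ "[:w$j:]"]) simp
next
  case (pf_var3 i j)
  show ?case by (rule exI[of _ "[:M$i$j, X$i$j:]"]) simp
next
  case (pf_add f g)
  then obtain P Q where "\<forall>e. f (v, w, \<chi> i j. M$i$j + e * X$i$j) = poly P e"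
    and "\<forall>e. g (v, w, \<chi> i j. M$i$j + e * X$i$j) = poly Q e" by blast
  then show ?case by (intro exI[of _ "P + Q"]) simp
next
  case (pf_mult f g)
  then obtain P Q where "\<forall>e. f (v, w, \<chi> i j. M$i$j + e * X$i$j) = poly P e"
    and "\<forall>e. g (v, w, \<chi> i j. M$i$j + e * X$i$j) = poly Q e" by blast
  then show ?case by (intro exI[of _ "P * Q"]) simp
qed

lemma poly_eq_0_if_zero_outside_ball:
  fixes P :: "'a::real_normed_field poly"
  assumes "\<And>e. K < norm e \<Longrightarrow> poly P e = 0"
  shows "P = 0"
proof -
  define z :: "nat \<Rightarrow> 'a" where "z n = of_real (real n + \<bar>K\<bar> + 1)" for n
  have "K < norm (z n)" for n
  proof -
    have "norm (z n) = real n + \<bar>K\<bar> + 1" unfolding z_def norm_of_real by simp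
    then show ?thesis by linarith
  qed
  then have "range z \<subseteq> {x. poly P x = 0}" using assms by blast
  moreover have "inj z" by (auto simp: z_def inj_def)
  then have "infinite (range z)" by (rule range_inj_infinite)
  ultimately show ?thesis using finite_subset poly_roots_finite by blast
qed

definition entry_norm_sum :: "'a::real_normed_vector^'m^'n \<Rightarrow> real" where
  "entry_norm_sum M = (\<Sum>a\<in>UNIV. \<Sum>b\<in>UNIV. norm (M$a$b))"

lemma entry_norm_sum_transpose: "entry_norm_sum (transpose M) = entry_norm_sum M"
  unfolding entry_norm_sum_def transpose_def vec_lambda_beta by (rule sum.swap)

lemma entry_norm_sum_ge: "norm (M$a$b) \<le> entry_norm_sum M"
proof -
  have "norm (M$a$b) \<le> (\<Sum>b\<in>UNIV. norm (M$a$b))" by (rule member_le_sum) auto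
  also have "\<dots> \<le> entry_norm_sum M"
    unfolding entry_norm_sum_def by (rule member_le_sum) (auto intro: sum_nonneg)
  finally show ?thesis .
qed

lemma vec_eq_0_if_dominated:
  fixes M :: "'a::real_normed_field^'m^'k" and x :: "'a^'m"
  assumes out: "\<And>b. b \<notin> S \<Longrightarrow> x$b = 0"
    and eq: "\<And>b. b \<in> S \<Longrightarrow> (M *v x)$(\<rho> b) + e * x$b = 0"
    and big: "entry_norm_sum M < norm e"
  shows "x = 0"
proof (rule ccontr)
  assume "x \<noteq> 0"
  \<comment> \<open>compare both sides of the equation at an entry of maximal modulus\<close>
  obtain m where m: "\<And>b. norm (x$b) \<le> norm (x$m)"
    using Max_ge[of "range (\<lambda>b. norm (x$b))"] Max_in[of "range (\<lambda>b. norm (x$b))"] by fastforce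
  have "x$m \<noteq> 0"
  proof
    assume "x$m = 0"
    then have "x$b = 0" for b using m[of b] by simp
    then show False using \<open>x \<noteq> 0\<close> by (simp add: vec_eq_iff)
  qed
  then have "m \<in> S" using out by blast
  have "norm e * norm (x$m) = norm ((M *v x)$(\<rho> m))"
    using eq[OF \<open>m \<in> S\<close>] by (metis add_eq_0_iff norm_minus_cancel norm_mult)
  also have "\<dots> \<le> (\<Sum>b\<in>UNIV. norm (M$(\<rho> m)$b) * norm (x$b))"
    unfolding matrix_vector_mult_def vec_lambda_beta
    by (rule order_trans[OF norm_sum]) (simp add: norm_mult)
  also have "\<dots> \<le> (\<Sum>b\<in>UNIV. norm (M$(\<rho> m)$b)) * norm (x$m)"
    unfolding sum_distrib_right by (intro sum_mono mult_left_mono m) auto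
  also have "\<dots> \<le> entry_norm_sum M * norm (x$m)"
    unfolding entry_norm_sum_def by (intro mult_right_mono member_le_sum) (auto intro: sum_nonneg)
  finally have "norm e \<le> entry_norm_sum M" using \<open>x$m \<noteq> 0\<close> by simp
  then show False using big by simp
qed

definition diag_mat :: "('n \<Rightarrow> 'a::semiring_1) \<Rightarrow> 'a^'n^'n" where
  "diag_mat d = (\<chi> a b. if a = b then d a else 0)"

lemma diag_mat_mult_vec: "diag_mat d *v x = (\<chi> a. d a * x$a)"
proof -
  have "(\<Sum>k\<in>UNIV. (if a = k then d a else 0) * x$k) = (\<Sum>k\<in>UNIV. if k = a then d a * x$a else 0)"
    for a by (rule sum.cong) auto
  then show ?thesis by (simp add: diag_mat_def matrix_vector_mult_def vec_eq_iff)
qed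

lemma diag_mat_mult_left: "diag_mat d ** X = (\<chi> a b. d a * X$a$b)"
proof -
  have "(\<Sum>k\<in>UNIV. (if a = k then d a else 0) * X$k$b) = (\<Sum>k\<in>UNIV. if k = a then d a * X$a$b else 0)"
    for a b by (rule sum.cong) auto
  then show ?thesis by (simp add: diag_mat_def matrix_matrix_mult_def vec_eq_iff)
qed

lemma diag_mat_mult_right: "X ** diag_mat d = (\<chi> a b. X$a$b * d b)"
proof -
  have "(\<Sum>k\<in>UNIV. X$a$k * (if k = b then d k else 0)) = (\<Sum>k\<in>UNIV. if k = b then X$a$b * d b else 0)"
    for a b by (rule sum.cong) auto
  then show ?thesis by (simp add: diag_mat_def matrix_matrix_mult_def vec_eq_iff)
qed

lemma transpose_diag_mat [simp]: "transpose (diag_mat d) = diag_mat d"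
  by (simp add: diag_mat_def transpose_def vec_eq_iff)

lemma invertible_diag_mat:
  fixes d :: "'n::finite \<Rightarrow> 'a::field"
  assumes "\<And>a. d a \<noteq> 0"
  shows "invertible (diag_mat d)" and "matrix_inv (diag_mat d) = diag_mat (\<lambda>a. inverse (d a))"
proof -
  have "diag_mat d ** diag_mat (\<lambda>a. inverse (d a)) = mat 1"
    using assms unfolding diag_mat_mult_left by (simp add: diag_mat_def mat_def vec_eq_iff)
  then show "invertible (diag_mat d)" "matrix_inv (diag_mat d) = diag_mat (\<lambda>a. inverse (d a))"
    using invertible_right_inverse matrix_inv_unique by blast+
qed

lemma pact_pact:
  assumes "invertible A" "invertible B" "invertible g" "invertible h"
  shows "pact A B (pact g h x) = pact (A ** g) (B ** h) x"
  using assms by (cases x) (simp add: pact_def matrix_inv_mult matrix_vector_mul_assoc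
      matrix_transpose_mul matrix_mul_assoc)

lemma pact_mem_orbit:
  assumes "q \<in> orbit x" "invertible A" "invertible B"
  shows "pact A B q \<in> orbit x"
proof -
  obtain g h where "invertible g" "invertible h" "q = pact g h x"
    using assms(1) unfolding orbit_def by blast
  then have "pact A B q = pact (A ** g) (B ** h) x" "invertible (A ** g)" "invertible (B ** h)"
    using assms(2,3) by (simp_all add: pact_pact invertible_mult)
  then show ?thesis unfolding orbit_def by blast
qed

definition pairing :: "('n1::finite,'n2::finite) pt \<Rightarrow> complex" where
  "pairing = (\<lambda>(v, w, M). \<Sum>a\<in>UNIV. \<Sum>b\<in>UNIV. v$a * M$a$b * w$b)"

lemma pairing_eq: "pairing (v, w, M) = (\<Sum>a\<in>UNIV. v$a * (M *v w)$a)"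
  by (simp add: pairing_def matrix_vector_mult_def sum_distrib_left mult_ac)

lemma sum_matrix_vector_mult_adjoint:
  "(\<Sum>a\<in>UNIV. (g *v v)$a * y$a) = (\<Sum>b\<in>UNIV. v$b * (y v* g)$b)"
  for y :: "'a::comm_semiring_1^'n"
proof -
  have "(\<Sum>a\<in>UNIV. (g *v v)$a * y$a) = (\<Sum>a\<in>UNIV. \<Sum>b\<in>UNIV. g$a$b * v$b * y$a)"
    by (simp add: matrix_vector_mult_def sum_distrib_right)
  also have "\<dots> = (\<Sum>b\<in>UNIV. \<Sum>a\<in>UNIV. g$a$b * v$b * y$a)" by (rule sum.swap)
  also have "\<dots> = (\<Sum>b\<in>UNIV. v$b * (y v* g)$b)"
    by (simp add: vector_matrix_mult_def sum_distrib_left mult_ac)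
  finally show ?thesis .
qed

lemma pairing_pact:
  assumes "invertible g" "invertible h"
  shows "pairing (pact g h p) = pairing p"
proof -
  obtain v w M where p: "p = (v, w, M)" by (cases p)
  have "(transpose (matrix_inv g) ** M ** matrix_inv h) *v (h *v w)
      = transpose (matrix_inv g) *v (M *v w)"
    by (simp add: matrix_vector_mul_assoc matrix_mul_assoc[symmetric] matrix_inv_left[OF assms(2)])
  moreover have "(z v* matrix_inv g) v* g = z" for z :: "complex^_"
    by (simp add: vector_matrix_mul_assoc matrix_inv_left[OF assms(1)])
  ultimately show ?thesis
    by (simp add: p pact_def pairing_eq sum_matrix_vector_mult_adjoint)
qed

lemma invariant_section_pairing:
  "invariant_section 1 (pairing :: ('n1::finite,'n2::finite) pt \<Rightarrow> complex)"
proof -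
  have "(pairing :: ('n1,'n2) pt \<Rightarrow> complex) = (\<lambda>p. \<Sum>a\<in>UNIV. \<Sum>b\<in>UNIV.
      (\<lambda>(v, w, M). v$a) p * (\<lambda>(v, w, M). M$a$b) p * (\<lambda>(v, w, M). w$b) p)"
    by (auto simp: pairing_def fun_eq_iff)
  moreover have "poly_fun \<dots>"
    by (intro poly_fun_sum pf_mult pf_var1 pf_var2 pf_var3) auto
  ultimately have "poly_fun (pairing :: ('n1,'n2) pt \<Rightarrow> complex)" by (simp only:)
  moreover have "multihom (pairing :: ('n1,'n2) pt \<Rightarrow> complex) 1 1 1"
    unfolding multihom_def pairing_def by (simp add: sum_distrib_left mult_ac)
  ultimately show ?thesis
    unfolding invariant_section_def using pairing_pact by blast
qed

lemma invariant_section_vanishes_if_rescaled: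
  assumes f: "invariant_section k f" and "k \<ge> 1" and "invertible g" "invertible h"
    and scaled: "pact g h (v, w, M) = ((\<chi> i. s * v$i), (\<chi> j. t * w$j), (\<chi> i j. u * M$i$j))"
    and "norm (s * t * u) \<noteq> 1"
  shows "f (v, w, M) = 0"
proof -
  have "f (v, w, M) = f (pact g h (v, w, M))"
    using f \<open>invertible g\<close> \<open>invertible h\<close> unfolding invariant_section_def by simp
  also have "\<dots> = (s * t * u) ^ k * f (v, w, M)"
    using f unfolding invariant_section_def multihom_def scaled by (simp add: power_mult_distrib)
  finally have "((s * t * u) ^ k - 1) * f (v, w, M) = 0" by (simp add: algebra_simps)
  moreover have "(s * t * u) ^ k \<noteq> 1"
  proof
    assume "(s * t * u) ^ k = 1"
    then have "norm (s * t * u) ^ k = 1" by (metis norm_one norm_power)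
    then show False using power_eq_1_iff[of "norm (s * t * u)" k] \<open>k \<ge> 1\<close> assms(6) by simp
  qed
  ultimately show ?thesis by simp
qed

definition swap_pt :: "('n1::finite,'n2::finite) pt \<Rightarrow> ('n2,'n1) pt" where
  "swap_pt = (\<lambda>(v, w, M). (w, v, transpose M))"

lemma swap_pt_pact: "swap_pt (pact g h p) = pact h g (swap_pt p)"
  by (cases p) (simp add: swap_pt_def pact_def matrix_transpose_mul matrix_mul_assoc)

lemma mem_orbit_if_swap_pt:
  assumes "swap_pt q \<in> orbit (swap_pt x)"
  shows "q \<in> orbit x"
proof -
  obtain h g where "invertible g" "invertible h" "swap_pt q = pact h g (swap_pt x)"
    using assms unfolding orbit_def by blast
  moreover have "inj swap_pt" by (auto simp: inj_def swap_pt_def)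
  ultimately show ?thesis unfolding orbit_def swap_pt_pact[symmetric] by (auto dest: injD)
qed

lemma column_matrix_mult: "column j (A ** B) = A *v column j B"
  by (simp add: column_def matrix_matrix_mult_def matrix_vector_mult_def)

lemma perturbed_matrix_mult_vec:
  "((\<chi> i j. M$i$j + e * X$i$j) *v x)$a = (M *v x)$a + e * (X *v x)$a"
  by (simp add: matrix_vector_mult_def algebra_simps sum.distrib sum_distrib_left)

lemma matrix_mult_perturbed:
  fixes U :: "'a::comm_ring_1^'m^'n"
  shows "U ** (\<chi> i j. M$i$j + e * X$i$j) ** W
    = (\<chi> i j. (U ** M ** W)$i$j + e * (U ** X ** W)$i$j)"
proof -
  have left: "U ** (\<chi> i j. M$i$j + e * X$i$j) = (\<chi> i j. (U ** M)$i$j + e * (U ** X)$i$j)"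
    by (simp add: matrix_matrix_mult_def vec_eq_iff distrib_left sum.distrib sum_distrib_left
        mult.left_commute)
  have right: "(\<chi> i j. N$i$j + e * Y$i$j) ** W = (\<chi> i j. (N ** W)$i$j + e * (Y ** W)$i$j)"
    for N Y
    by (simp add: matrix_matrix_mult_def vec_eq_iff distrib_right sum.distrib sum_distrib_left
        mult.assoc)
  show ?thesis by (simp only: left right)
qed

lemma pairing_columns:
  "(transpose A ** M ** B)$i$j = pairing (column i A, column j B, M)"
proof -
  have "(transpose A ** M ** B)$i$j = (\<Sum>b\<in>UNIV. (\<Sum>a\<in>UNIV. A$a$i * M$a$b) * B$b$j)"
    by (simp add: matrix_matrix_mult_def transpose_def)
  also have "\<dots> = (\<Sum>b\<in>UNIV. \<Sum>a\<in>UNIV. A$a$i * M$a$b * B$b$j)"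
    by (simp add: sum_distrib_right)
  also have "\<dots> = (\<Sum>a\<in>UNIV. \<Sum>b\<in>UNIV. A$a$i * M$a$b * B$b$j)"
    by (rule sum.swap)
  finally show ?thesis by (simp add: pairing_def column_def)
qed

definition swap01 :: "nat \<Rightarrow> nat" where
  "swap01 k = (if k = 0 then 1 else if k = 1 then 0 else k)"

lemma swap01_simps [simp]: "swap01 0 = 1" "swap01 (Suc 0) = 0"
  by (simp_all add: swap01_def)

lemma swap01_swap01 [simp]: "swap01 (swap01 k) = k"
  by (simp add: swap01_def)

lemma swap01_less_iff: "2 \<le> m \<Longrightarrow> swap01 k < m \<longleftrightarrow> k < m"
  by (auto simp: swap01_def)

lemma bij_betw_swap01: "2 \<le> m \<Longrightarrow> bij_betw swap01 {..<m} {..<m}"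
  by (rule bij_betw_byWitness[of _ swap01]) (auto simp: swap01_less_iff)

locale standard_bases =
  fixes i1 :: "nat \<Rightarrow> 'n1::finite" and i2 :: "nat \<Rightarrow> 'n2::finite"
  assumes card1: "CARD('n1) \<ge> 2" and card2: "CARD('n2) \<ge> 2"
    and bij1: "bij_betw i1 {..<CARD('n1)} UNIV" and bij2: "bij_betw i2 {..<CARD('n2)} UNIV"
begin

text \<open>\<open>Phi\<close> is the matrix of \<phi>_n, of rank \<open>rk\<close>; pos1 and pos2 invert the enumerations of the
  bases, which start at index 0 (so e_1 is i1 0 and f_2 is i2 1).\<close>

definition pos1 :: "'n1 \<Rightarrow> nat" where "pos1 = inv_into {..<CARD('n1)} i1"
definition pos2 :: "'n2 \<Rightarrow> nat" where "pos2 = inv_into {..<CARD('n2)} i2"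
definition rk :: nat where "rk = min CARD('n1) CARD('n2)"
definition Phi :: "complex^'n2^'n1" where "Phi = snd (snd (xbar i1 i2))"

lemma pos1_less: "pos1 a < CARD('n1)" and i1_pos1 [simp]: "i1 (pos1 a) = a"
  using bij1 unfolding pos1_def bij_betw_def
  by (metis UNIV_I inv_into_into lessThan_iff, metis UNIV_I f_inv_into_f)

lemma pos1_i1 [simp]: "k < CARD('n1) \<Longrightarrow> pos1 (i1 k) = k"
  using bij1 unfolding pos1_def by (simp add: bij_betw_inv_into_left)

lemma i2_pos2 [simp]: "i2 (pos2 b) = b"
  using bij2 unfolding pos2_def bij_betw_def by (metis UNIV_I f_inv_into_f)

lemma pos2_i2 [simp]: "k < CARD('n2) \<Longrightarrow> pos2 (i2 k) = k"
  using bij2 unfolding pos2_def by (simp add: bij_betw_inv_into_left)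

lemma rk_bounds: "2 \<le> rk" "rk \<le> CARD('n1)" "rk \<le> CARD('n2)"
  using card1 card2 by (auto simp: rk_def)

lemma pos_first_two [simp]: "pos1 (i1 0) = 0" "pos1 (i1 1) = 1" "pos2 (i2 0) = 0" "pos2 (i2 1) = 1"
  using card1 card2 by auto

lemma first_two_distinct: "i1 0 \<noteq> i1 1" "i2 0 \<noteq> i2 1"
  using pos_first_two by (metis zero_neq_one)+

lemma xbar_eq: "xbar i1 i2 = (axis (i1 0) 1, axis (i2 1) 1, Phi)"
  by (simp add: xbar_def Phi_def)

lemma Phi_entry: "Phi$a$b = (if pos1 a < rk \<and> b = i2 (pos1 a) then 1 else 0)"
proof -
  have "(\<exists>k<rk. a = i1 k \<and> b = i2 k) \<longleftrightarrow> (pos1 a < rk \<and> b = i2 (pos1 a))"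
    using rk_bounds by (metis i1_pos1 order_less_le_trans pos1_i1)
  then show ?thesis by (simp add: Phi_def xbar_def rk_def)
qed

lemma Phi_mult_vec: "(Phi *v x)$a = (if pos1 a < rk then x$(i2 (pos1 a)) else 0)"
proof -
  have "(Phi *v x)$a = (\<Sum>b\<in>UNIV. if b = i2 (pos1 a) then (if pos1 a < rk then x$b else 0) else 0)"
    unfolding matrix_vector_mult_def vec_lambda_beta by (intro sum.cong) (auto simp: Phi_entry)
  then show ?thesis by simp
qed

lemma Phi_mult: "(Phi ** X)$a$c = (if pos1 a < rk then X$(i2 (pos1 a))$c else 0)"
proof -
  have "(Phi ** X)$a$c = (\<Sum>b\<in>UNIV. if b = i2 (pos1 a) then (if pos1 a < rk then X$b$c else 0) else 0)"
    unfolding matrix_matrix_mult_def vec_lambda_beta by (intro sum.cong) (auto simp: Phi_entry)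
  then show ?thesis by simp
qed

lemma invariant_section_vanishes_at_xbar:
  assumes "invariant_section k f" "k \<ge> 1"
  shows "f (xbar i1 i2) = 0"
proof -
  define d1 where "d1 a = (if a = i1 0 then 2 else 1 :: complex)" for a
  define d2 where "d2 b = (if b = i2 0 then 1/2 else 1 :: complex)" for b
  have inv1: "invertible (diag_mat d1)" "matrix_inv (diag_mat d1) = diag_mat (\<lambda>a. inverse (d1 a))"
    using invertible_diag_mat[of d1] by (auto simp: d1_def)
  have inv2: "invertible (diag_mat d2)" "matrix_inv (diag_mat d2) = diag_mat (\<lambda>b. inverse (d2 b))"
    using invertible_diag_mat[of d2] by (auto simp: d2_def)
  have "inverse (d1 a) * Phi$a$b * inverse (d2 b) = Phi$a$b" for a b
  proof (cases "Phi$a$b = 0")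
    case False
    then have "pos1 a < rk" and b: "b = i2 (pos1 a)" by (auto simp: Phi_entry split: if_splits)
    then have "a = i1 0 \<longleftrightarrow> b = i2 0"
      using rk_bounds by (metis i1_pos1 pos1_i1 pos2_i2 order_less_le_trans card1 card2 b
          pos_first_two(1,3) zero_less_iff_neq_zero)
    then show ?thesis by (auto simp: d1_def d2_def)
  qed simp
  then have rescaled: "pact (diag_mat d1) (diag_mat d2) (axis (i1 0) 1, axis (i2 1) 1, Phi)
      = ((\<chi> i. 2 * axis (i1 0) 1 $ i), (\<chi> j. 1 * axis (i2 1) 1 $ j), (\<chi> i j. 1 * Phi $ i $ j))"
    using pos_first_two first_two_distinct
    by (auto simp: pact_def inv1(2) inv2(2) diag_mat_mult_vec diag_mat_mult_left
        diag_mat_mult_right d1_def d2_def axis_def vec_eq_iff)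
  show ?thesis
    unfolding xbar_eq by (rule invariant_section_vanishes_if_rescaled[OF assms inv1(1) inv2(1) rescaled]) simp
qed

lemma mem_orbit_xbarI:
  fixes P :: "complex^'n1^'n1" and Q :: "complex^'n2^'n2"
  assumes "invertible P" "invertible Q"
    and "transpose P *v axis (i1 0) 1 = axis (i1 0) 1" and "Q *v axis (i2 1) 1 = axis (i2 1) 1"
  shows "(axis (i1 0) 1, axis (i2 1) 1, P ** Phi ** Q) \<in> orbit (xbar i1 i2)"
proof -
  define g where "g = transpose (matrix_inv P)"
  define h where "h = matrix_inv Q"
  have g: "invertible g" "transpose (matrix_inv g) = P"
    using invertible_transpose[of "matrix_inv P"] invertible_matrix_inv[OF assms(1)]
    by (simp_all add: g_def)
  have h: "invertible h" "matrix_inv h = Q"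
    using invertible_matrix_inv[OF assms(2)] by (simp_all add: h_def)
  have "g ** transpose P = mat 1"
    by (simp add: g_def matrix_inv_right[OF assms(1)] flip: matrix_transpose_mul)
  then have ge: "g *v axis (i1 0) 1 = axis (i1 0) 1"
    by (metis assms(3) matrix_vector_mul_assoc matrix_vector_mul_lid)
  have "h ** Q = mat 1" by (simp add: h_def matrix_inv_left[OF assms(2)])
  then have he: "h *v axis (i2 1) 1 = axis (i2 1) 1"
    by (metis assms(4) matrix_vector_mul_assoc matrix_vector_mul_lid)
  have "pact g h (xbar i1 i2) = (axis (i1 0) 1, axis (i2 1) 1, P ** Phi ** Q)"
    using g h ge he by (simp add: pact_def xbar_eq)
  then show ?thesis
    unfolding orbit_def mem_Collect_eq using g(1) h(1) by metis
qed

lemma perturbed_Phi_kernel: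
  assumes "entry_norm_sum M < norm e" and "(\<chi> i j. M$i$j + e * Phi$i$j) *v x = 0"
    and "\<And>b. \<not> pos2 b < rk \<Longrightarrow> x$b = 0"
  shows "x = 0"
proof (rule vec_eq_0_if_dominated[where S = "{b. pos2 b < rk}" and \<rho> = "\<lambda>b. i1 (pos2 b)"])
  show "x$b = 0" if "b \<notin> {b. pos2 b < rk}" for b using assms(3) that by simp
  show "entry_norm_sum M < norm e" by (rule assms(1))
  fix b assume "b \<in> {b. pos2 b < rk}"
  then have "(Phi *v x)$(i1 (pos2 b)) = x$b"
    using rk_bounds by (simp add: Phi_mult_vec)
  moreover have "((\<chi> i j. M$i$j + e * Phi$i$j) *v x)$(i1 (pos2 b)) = 0"
    using assms(2) by simp
  ultimately show "(M *v x)$(i1 (pos2 b)) + e * x$b = 0"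
    by (simp only: perturbed_matrix_mult_vec)
qed

text \<open>For n1 \<le> n2 the rows of \<open>Phi ** X\<close> are the rows i2 0, ..., i2 (n1 - 1) of X; putting row
  i1 k of N into row i2 k, and the identity elsewhere, gives a right factor of N.\<close>

definition lift_rows :: "complex^'n2^'n1 \<Rightarrow> complex^'n2^'n2" where
  "lift_rows N = (\<chi> b b'. if pos2 b < rk then N$(i1 (pos2 b))$b' else mat 1 $ b $ b')"

lemma Phi_mult_lift_rows:
  assumes "CARD('n1) \<le> CARD('n2)"
  shows "Phi ** lift_rows N = N"
proof -
  have "pos1 a < CARD('n2)" for a using pos1_less[of a] assms by simp
  then show ?thesis
    using pos1_less assms by (simp add: Phi_mult lift_rows_def vec_eq_iff rk_def)
qed

lemma lift_rows_mult_vec: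
  "(lift_rows N *v x)$b = (if pos2 b < rk then (N *v x)$(i1 (pos2 b)) else x$b)"
proof (cases "pos2 b < rk")
  case False
  have "(lift_rows N *v x)$b = (\<Sum>d\<in>UNIV. if d = b then x$b else 0)"
    unfolding matrix_vector_mult_def lift_rows_def vec_lambda_beta using False
    by (intro sum.cong) (auto simp: mat_def)
  then show ?thesis using False by simp
qed (simp add: lift_rows_def matrix_vector_mult_def)

lemma lift_rows_kernel:
  assumes "CARD('n1) \<le> CARD('n2)" and "lift_rows N *v x = 0"
  shows "N *v x = 0" and "\<And>b. \<not> pos2 b < rk \<Longrightarrow> x$b = 0"
proof -
  have "(N *v x)$a = 0" for a
  proof -
    have "pos1 a < CARD('n2)" "pos1 a < rk"
      using pos1_less[of a] assms(1) by (auto simp: rk_def)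
    then show ?thesis
      using lift_rows_mult_vec[of N x "i2 (pos1 a)"] assms(2) by simp
  qed
  then show "N *v x = 0" by (simp add: vec_eq_iff)
  show "x$b = 0" if "\<not> pos2 b < rk" for b
    using lift_rows_mult_vec[of N x b] assms(2) that by simp
qed

text \<open>For n1 \<le> n2, write N = P N' with P fixing e_1^* and with column f_2 of N' equal to e_2
  (possible as N(e_1, f_2) = 0 \<noteq> N(e_2, f_2)); then N' = Phi Q with Q = lift_rows N', which fixes f_2
  and is invertible once e dominates M.\<close>

lemma perturbed_Phi_mem_orbit_if_le:
  assumes le: "CARD('n1) \<le> CARD('n2)" and corner: "M$(i1 0)$(i2 1) = 0"
    and big: "entry_norm_sum M < norm e"
  shows "(axis (i1 0) 1, axis (i2 1) 1, \<chi> i j. M$i$j + e * Phi$i$j) \<in> orbit (xbar i1 i2)"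
proof -
  define N where "N = (\<chi> i j. M$i$j + e * Phi$i$j)"
  define c where "c = column (i2 1) N"
  have c0: "c$(i1 0) = 0"
    using corner first_two_distinct rk_bounds by (simp add: c_def N_def column_def Phi_entry)
  have "norm (M$(i1 1)$(i2 1)) < norm e"
    using entry_norm_sum_ge big by (rule le_less_trans)
  then have c1: "c$(i1 1) \<noteq> 0"
    using rk_bounds by (auto simp: c_def N_def column_def Phi_entry add_eq_0_iff)
  define P where "P = replace_col (i1 1) c"
  have P: "invertible P" "P *v axis (i1 1) 1 = c"
    using c1 by (simp_all add: P_def invertible_replace_col replace_col_axis)
  have "column (i1 0) (transpose P) = axis (i1 0) 1"
    using c0 first_two_distinct(1)
    by (auto simp: P_def replace_col_def column_def transpose_def axis_def vec_eq_iff)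
  then have P_row: "transpose P *v axis (i1 0) 1 = axis (i1 0) 1"
    by (simp only: matrix_vector_mult_axis)
  define Q where "Q = lift_rows (matrix_inv P ** N)"
  have "P ** Phi ** Q = P ** (matrix_inv P ** N)"
    by (simp only: Q_def Phi_mult_lift_rows[OF le] flip: matrix_mul_assoc)
  also have "\<dots> = N"
    by (simp only: matrix_mul_assoc matrix_inv_right[OF P(1)] matrix_mul_lid)
  finally have PQ: "P ** Phi ** Q = N" .
  have "column (i2 1) (matrix_inv P ** N) = matrix_inv P *v (P *v axis (i1 1) 1)"
    by (simp only: column_matrix_mult P(2) c_def)
  also have "\<dots> = axis (i1 1) 1"
    by (simp only: matrix_vector_mul_assoc matrix_inv_left[OF P(1)] matrix_vector_mul_lid)
  finally have "column (i2 1) (matrix_inv P ** N) = axis (i1 1) 1" .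
  then have col: "(matrix_inv P ** N)$a$(i2 1) = (if a = i1 1 then 1 else 0)" for a
    by (simp add: column_def vec_eq_iff axis_def)
  have "Q$b$(i2 1) = (if b = i2 1 then 1 else 0)" for b
  proof (cases "pos2 b < rk")
    case True
    then have "i1 (pos2 b) = i1 1 \<longleftrightarrow> b = i2 1"
      using rk_bounds by (metis i2_pos2 order_less_le_trans pos1_i1 pos_first_two(2,4))
    then show ?thesis using True col[of "i1 (pos2 b)"] by (simp add: Q_def lift_rows_def)
  next
    case False
    then show ?thesis using rk_bounds by (auto simp: Q_def lift_rows_def mat_def)
  qed
  then have "column (i2 1) Q = axis (i2 1) 1" by (simp add: column_def axis_def vec_eq_iff)
  then have Q_col: "Q *v axis (i2 1) 1 = axis (i2 1) 1"
    by (simp only: matrix_vector_mult_axis)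
  have "invertible Q"
  proof (rule invertible_if_trivial_kernel)
    fix x assume "Q *v x = 0"
    then have "(matrix_inv P ** N) *v x = 0" and out: "\<And>b. \<not> pos2 b < rk \<Longrightarrow> x$b = 0"
      using lift_rows_kernel[OF le] by (auto simp: Q_def)
    then have "N *v x = 0"
      using P(1) by (metis matrix_inv_right matrix_mul_assoc matrix_mul_lid matrix_vector_mul_assoc
          matrix_vector_mult_0_right)
    then show "x = 0" using perturbed_Phi_kernel[OF big _ out] by (simp add: N_def)
  qed
  then show ?thesis
    using mem_orbit_xbarI[OF P(1) _ P_row Q_col] by (simp add: PQ N_def)
qed

text \<open>The case n2 < n1 follows from n1 \<le> n2 by exchanging the two factors; swapping the indices
  0 and 1 of both enumerations brings e_1 and f_2 back into the positions they have in xbar.\<close>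

lemma standard_bases_swap: "standard_bases (i2 \<circ> swap01) (i1 \<circ> swap01)"
proof
  show "bij_betw (i2 \<circ> swap01) {..<CARD('n2)} UNIV"
    using bij_betw_trans[OF bij_betw_swap01[OF card2] bij2] .
  show "bij_betw (i1 \<circ> swap01) {..<CARD('n1)} UNIV"
    using bij_betw_trans[OF bij_betw_swap01[OF card1] bij1] .
qed (use card1 card2 in auto)

lemma swap_pt_xbar: "swap_pt (xbar i1 i2) = xbar (i2 \<circ> swap01) (i1 \<circ> swap01)"
proof -
  have "(\<exists>k<rk. a = i1 k \<and> b = i2 k) \<longleftrightarrow> (\<exists>k<rk. b = i2 (swap01 k) \<and> a = i1 (swap01 k))"
    for a b using swap01_less_iff[OF rk_bounds(1)] swap01_swap01 by metis
  then show ?thesis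
    by (simp add: swap_pt_def xbar_def transpose_def rk_def min.commute)
qed

lemma perturbed_Phi_mem_orbit:
  assumes corner: "M$(i1 0)$(i2 1) = 0" and big: "entry_norm_sum M < norm e"
  shows "(axis (i1 0) 1, axis (i2 1) 1, \<chi> i j. M$i$j + e * Phi$i$j) \<in> orbit (xbar i1 i2)"
proof (cases "CARD('n1) \<le> CARD('n2)")
  case True
  then show ?thesis using perturbed_Phi_mem_orbit_if_le assms by blast
next
  case False
  interpret swapped: standard_bases "i2 \<circ> swap01" "i1 \<circ> swap01"
    by (rule standard_bases_swap)
  have Phi_swapped: "swapped.Phi = transpose Phi"
    unfolding swapped.Phi_def Phi_def swap_pt_xbar[symmetric] by (simp add: swap_pt_def case_prod_beta)
  have "(axis ((i2 \<circ> swap01) 0) 1, axis ((i1 \<circ> swap01) 1) 1,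
      \<chi> i j. transpose M$i$j + e * swapped.Phi$i$j) \<in> orbit (xbar (i2 \<circ> swap01) (i1 \<circ> swap01))"
  proof (rule swapped.perturbed_Phi_mem_orbit_if_le)
    show "CARD('n2) \<le> CARD('n1)" using False by simp
    show "transpose M $ (i2 \<circ> swap01) 0 $ (i1 \<circ> swap01) 1 = 0"
      using corner by (simp add: transpose_def)
    show "entry_norm_sum (transpose M) < norm e" using big by (simp add: entry_norm_sum_transpose)
  qed
  then have "swap_pt (axis (i1 0) 1, axis (i2 1) 1, \<chi> i j. M$i$j + e * Phi$i$j)
      \<in> orbit (swap_pt (xbar i1 i2))"
    unfolding swap_pt_xbar by (simp add: swap_pt_def Phi_swapped transpose_def)
  then show ?thesis by (rule mem_orbit_if_swap_pt)
qed

lemma perturbation_line_in_orbit: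
  fixes v :: "complex^'n1" and w :: "complex^'n2"
  assumes "v \<noteq> 0" and "w \<noteq> 0" and "pairing (v, w, M) = 0"
  obtains X K where "\<And>e. K < norm e \<Longrightarrow> (v, w, \<chi> i j. M$i$j + e * X$i$j) \<in> orbit (xbar i1 i2)"
proof -
  obtain A where A: "invertible A" "A *v axis (i1 0) 1 = v"
    using exists_invertible_axis_to[OF assms(1)] by blast
  obtain B where B: "invertible B" "B *v axis (i2 1) 1 = w"
    using exists_invertible_axis_to[OF assms(2)] by blast
  define M' where "M' = transpose A ** M ** B"
  define X where "X = transpose (matrix_inv A) ** Phi ** matrix_inv B"
  have corner: "M'$(i1 0)$(i2 1) = 0"
    using assms(3) A(2) B(2) by (simp add: M'_def pairing_columns flip: matrix_vector_mult_axis)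
  have "transpose (matrix_inv A) ** M' ** matrix_inv B
      = transpose (A ** matrix_inv A) ** M ** (B ** matrix_inv B)"
    by (simp add: M'_def matrix_transpose_mul matrix_mul_assoc)
  then have M: "transpose (matrix_inv A) ** M' ** matrix_inv B = M"
    by (simp add: matrix_inv_right A(1) B(1))
  have "(v, w, \<chi> i j. M$i$j + e * X$i$j) \<in> orbit (xbar i1 i2)" if "entry_norm_sum M' < norm e" for e
  proof -
    have "pact A B (axis (i1 0) 1, axis (i2 1) 1, \<chi> i j. M'$i$j + e * Phi$i$j)
        = (v, w, \<chi> i j. M$i$j + e * X$i$j)"
      using A B M by (simp add: pact_def matrix_mult_perturbed X_def)
    then show ?thesis
      using pact_mem_orbit[OF perturbed_Phi_mem_orbit[OF corner that] A(1) B(1)] by simp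
  qed
  then show ?thesis using that by blast
qed

lemma poly_fun_vanishing_on_orbit_xbar:
  assumes "poly_fun f" and "\<forall>q\<in>orbit (xbar i1 i2). f q = 0"
    and "v \<noteq> 0" and "w \<noteq> 0" and "pairing (v, w, M) = 0"
  shows "f (v, w, M) = 0"
proof -
  obtain X K where line: "\<And>e. K < norm e \<Longrightarrow> (v, w, \<chi> i j. M$i$j + e * X$i$j) \<in> orbit (xbar i1 i2)"
    using perturbation_line_in_orbit[OF assms(3-5)] by blast
  obtain P where P: "\<And>e. f (v, w, \<chi> i j. M$i$j + e * X$i$j) = poly P e"
    using poly_fun_on_line[OF assms(1)] by blast
  have "poly P e = 0" if "K < norm e" for e
    using assms(2) line[OF that] by (simp flip: P)
  then have "P = 0" by (rule poly_eq_0_if_zero_outside_ball)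
  moreover have "(\<chi> i j. M$i$j + 0 * X$i$j) = M" by (simp add: vec_eq_iff)
  ultimately show ?thesis using P[of 0] by simp
qed

lemma unstable_set_subset_closure: "unstable_set \<subseteq> zariski_closure (orbit (xbar i1 i2))"
proof
  fix p :: "('n1,'n2) pt"
  assume "p \<in> unstable_set"
  then obtain v w M where p: "p = (v, w, M)" and "v \<noteq> 0" "w \<noteq> 0" and "\<not> semistable p"
    by (auto simp: unstable_set_def valid_pt_def)
  then have "pairing (v, w, M) = 0"
    using invariant_section_pairing unfolding semistable_def by fastforce
  with \<open>p \<in> unstable_set\<close> show "p \<in> zariski_closure (orbit (xbar i1 i2))"
    using poly_fun_vanishing_on_orbit_xbar \<open>v \<noteq> 0\<close> \<open>w \<noteq> 0\<close>
    by (auto simp: zariski_closure_def unstable_set_def p)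
qed

lemma closure_subset_unstable_set: "zariski_closure (orbit (xbar i1 i2)) \<subseteq> unstable_set"
proof
  fix p :: "('n1,'n2) pt"
  assume p: "p \<in> zariski_closure (orbit (xbar i1 i2))"
  have "f p = 0" if f: "invariant_section k f" and "k \<ge> 1" for k f
  proof -
    have "f (pact g h (xbar i1 i2)) = 0" if "invertible g" "invertible h" for g h
      using f that invariant_section_vanishes_at_xbar[OF f \<open>k \<ge> 1\<close>]
      unfolding invariant_section_def by metis
    then have "\<forall>q\<in>orbit (xbar i1 i2). f q = 0" unfolding orbit_def by blast
    then show ?thesis
      using p f unfolding zariski_closure_def invariant_section_def by blast
  qed
  then show "p \<in> unstable_set"
    using p by (auto simp: unstable_set_def semistable_def zariski_closure_def)
qed

end

theorem proposition3p3:
  fixes i1 :: "nat \<Rightarrow> 'n1::finite" and i2 :: "nat \<Rightarrow> 'n2::finite"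
  assumes "CARD('n1) \<ge> 2" and "CARD('n2) \<ge> 2"
    and "bij_betw i1 {..<CARD('n1)} UNIV" and "bij_betw i2 {..<CARD('n2)} UNIV"
  shows "(unstable_set :: ('n1,'n2) pt set) = zariski_closure (orbit (xbar i1 i2))"
proof -
  interpret standard_bases i1 i2 using assms by unfold_locales
  show ?thesis using unstable_set_subset_closure closure_subset_unstable_set by (rule equalityI)
qed

end
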